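(* Let $P_{\mathrm{BS}}^{\max}>0$, $P_{\mathrm{A}}^{\max}>0$, $\sigma^2>0$, $\sigma_v^2>0$, $\varrho_f>0$, $\varrho_g>0$. Let $(f_n)_{n\ge1}$ and $(g_n)_{n\ge1}$ be independent sequences of i.i.d. random variables with $f_n\sim\mathcal{CN}(0,\varrho_f^2)$ and $g_n\sim\mathcal{CN}(0,\varrho_g^2)$. For each $N\ge1$ put $\mathbf f=[f_1,\dots,f_N]^{\mathrm T}$, $\mathbf g=[g_1,\dots,g_N]^{\mathrm T}$, and define the maximal achievable SNR of the active-RIS-aided single-user single-antenna system $$\gamma_{\mathrm{active}}(N)=\sup_{w,\,p,\,\boldsymbol\Theta}\ \frac{|p\,\mathbf f^{\mathrm H}\boldsymbol\Theta\mathbf g\,w|^2}{p^2\|\mathbf f^{\mathrm H}\boldsymbol\Theta\|^2\sigma_v^2+\sigma^2},$$ where the supremum is over $w\in\mathbb C$, $p\in\mathbb R_+$ and $\boldsymbol\Theta=\mathrm{diag}(e^{j\theta_1},\dots,e^{j\theta_N})$ with $\theta_n\in\mathbb R$, subject to $|w|^2\le P_{\mathrm{BS}}^{\max}$ and $p^2\|\boldsymbol\Theta\mathbf g w\|^2+p^2N\sigma_v^2\le P_{\mathrm{A}}^{\max}$. Then, as $N\to\infty$, $\gamma_{\mathrm{active}}(N)$ behaves asymptotically as $$\gamma_{\mathrm{active}}(N)\to N\,\frac{P_{\mathrm{BS}}^{\max}P_{\mathrm{A}}^{\max}\pi^2\varrho_f^2\varrho_g^2}{16\left(P_{\mathrm{A}}^{\max}\sigma_v^2\varrho_f^2+P_{\mathrm{BS}}^{\max}\sigma^2\varrho_g^2+\sigma^2\sigma_v^2\right)},$$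 in the sense that $\gamma_{\mathrm{active}}(N)/N$ converges almost surely to the displayed constant (the displayed expression divided by $N$).
   Context: Model: received signal $r=p\,\mathbf f^{\mathrm H}\boldsymbol\Theta\mathbf g\,w s+p\,\mathbf f^{\mathrm H}\boldsymbol\Theta\mathbf v+z$, where $s$ is a unit-power symbol, $\mathbf v\sim\mathcal{CN}(\mathbf 0,\sigma_v^2\mathbf I_N)$ is the noise introduced by the active RIS, $z\sim\mathcal{CN}(0,\sigma^2)$ is receiver noise, all RIS elements share the common amplification factor $p$, $P_{\mathrm{BS}}^{\max}$ is the maximum base-station transmit power and $P_{\mathrm{A}}^{\max}$ the maximum reflect power of the active RIS. $\mathcal{CN}(0,\varrho^2)$ denotes the circularly symmetric complex Gaussian distribution with variance $\varrho^2$. *)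

theory Defs
  imports "HOL-Probability.Probability"
begin

text \<open>Circularly symmetric complex Gaussian CN(0, rho^2): real and imaginary parts
  are independent real Gaussians with mean 0 and variance rho^2/2
  (standard deviation rho / sqrt 2).\<close>
definition complex_gaussian :: "'a measure \<Rightarrow> ('a \<Rightarrow> complex) \<Rightarrow> real \<Rightarrow> bool" where
  "complex_gaussian M X rho \<longleftrightarrow>
     X \<in> borel_measurable M \<and>
     distributed M lborel (\<lambda>x. Re (X x)) (\<lambda>t. ennreal (normal_density 0 (rho / sqrt 2) t)) \<and>
     distributed M lborel (\<lambda>x. Im (X x)) (\<lambda>t. ennreal (normal_density 0 (rho / sqrt 2) t)) \<and>
     prob_space.indep_var M borel (\<lambda>x. Re (X x)) borel (\<lambda>x. Im (X x))"

definition snr_active ::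
  "real \<Rightarrow> real \<Rightarrow> real \<Rightarrow> real \<Rightarrow> (nat \<Rightarrow> complex) \<Rightarrow> (nat \<Rightarrow> complex) \<Rightarrow> nat \<Rightarrow> real" where
  "snr_active Pbs Pa sigma2 sigmav2 f g N =
     Sup { (cmod (complex_of_real p * (\<Sum>n<N. cnj (f n) * cis (theta n) * g n) * w))\<^sup>2
           / (p\<^sup>2 * (\<Sum>n<N. (cmod (cnj (f n) * cis (theta n)))\<^sup>2) * sigmav2 + sigma2)
         | w p theta. p \<ge> 0 \<and> (cmod w)\<^sup>2 \<le> Pbs \<and>
             p\<^sup>2 * (\<Sum>n<N. (cmod (cis (theta n) * g n * w))\<^sup>2) + p\<^sup>2 * real N * sigmav2 \<le> Pa }"

end

(*
  For fixed channels the supremum defining snr_active is attained in closed form: co-phasing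
  theta n = - Arg (cnj (f n) * g n) turns the cascaded gain into S = sum |f n| |g n|, the base
  station transmits at full power and p exhausts the reflect-power budget.  This gives
  Pa Pbs S^2 / (Pa sigmav2 F + sigma2 Pbs G + N sigma2 sigmav2) with F = sum |f n|^2 and
  G = sum |g n|^2, so after division by N everything hinges on the almost sure limits of S/N,
  F/N and G/N.  These come from a strong law for nonnegative, pairwise uncorrelated summands
  with bounded second moments (Chebyshev and Borel-Cantelli along the squares k^2, then
  interpolation by monotonicity of the partial sums).  The limits are
  E |f| E |g| = (sqrt pi / 2 rho_f) (sqrt pi / 2 rho_g), the product of two Rayleigh means,
  and E |f|^2 = rho_f^2, E |g|^2 = rho_g^2 for the two empirical energies.
*)
theory Submission
  imports Defs "HOL-Library.Discrete_Functions"
begin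

section \<open>The optimal SNR in closed form\<close>

definition snr_objective ::
  "real \<Rightarrow> real \<Rightarrow> (nat \<Rightarrow> complex) \<Rightarrow> (nat \<Rightarrow> complex) \<Rightarrow> nat \<Rightarrow>
    complex \<Rightarrow> real \<Rightarrow> (nat \<Rightarrow> real) \<Rightarrow> real"
  where
  "snr_objective sigma2 sigmav2 f g N w p theta =
     (cmod (complex_of_real p * (\<Sum>n<N. cnj (f n) * cis (theta n) * g n) * w))\<^sup>2
       / (p\<^sup>2 * (\<Sum>n<N. (cmod (cnj (f n) * cis (theta n)))\<^sup>2) * sigmav2 + sigma2)"

definition snr_feasible ::
  "real \<Rightarrow> real \<Rightarrow> real \<Rightarrow> (nat \<Rightarrow> complex) \<Rightarrow> nat \<Rightarrow>
    complex \<Rightarrow> real \<Rightarrow> (nat \<Rightarrow> real) \<Rightarrow> bool"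
  where
  "snr_feasible Pbs Pa sigmav2 g N w p theta \<longleftrightarrow>
     p \<ge> 0 \<and> (cmod w)\<^sup>2 \<le> Pbs \<and>
     p\<^sup>2 * (\<Sum>n<N. (cmod (cis (theta n) * g n * w))\<^sup>2) + p\<^sup>2 * real N * sigmav2 \<le> Pa"

definition snr_optimum ::
  "real \<Rightarrow> real \<Rightarrow> real \<Rightarrow> real \<Rightarrow> (nat \<Rightarrow> complex) \<Rightarrow>
    (nat \<Rightarrow> complex) \<Rightarrow> nat \<Rightarrow> real"
  where
  "snr_optimum Pbs Pa sigma2 sigmav2 f g N =
     Pa * Pbs * (\<Sum>n<N. cmod (f n) * cmod (g n))\<^sup>2
       / (Pa * sigmav2 * (\<Sum>n<N. (cmod (f n))\<^sup>2) + sigma2 * Pbs * (\<Sum>n<N. (cmod (g n))\<^sup>2)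
          + real N * sigma2 * sigmav2)"

lemma snr_active_eq_Sup_objective:
  "snr_active Pbs Pa sigma2 sigmav2 f g N =
     Sup {snr_objective sigma2 sigmav2 f g N w p theta | w p theta.
            snr_feasible Pbs Pa sigmav2 g N w p theta}"
  by (simp add: snr_active_def snr_objective_def snr_feasible_def)

lemma snr_objective_eq:
  "snr_objective sigma2 sigmav2 f g N w p theta =
     p\<^sup>2 * (cmod (\<Sum>n<N. cnj (f n) * cis (theta n) * g n))\<^sup>2 * (cmod w)\<^sup>2
       / (p\<^sup>2 * (\<Sum>n<N. (cmod (f n))\<^sup>2) * sigmav2 + sigma2)"
  by (simp add: snr_objective_def norm_mult power_mult_distrib)

lemma snr_feasible_iff:
  "snr_feasible Pbs Pa sigmav2 g N w p theta \<longleftrightarrow>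
     p \<ge> 0 \<and> (cmod w)\<^sup>2 \<le> Pbs \<and>
     p\<^sup>2 * ((\<Sum>n<N. (cmod (g n))\<^sup>2) * (cmod w)\<^sup>2 + real N * sigmav2) \<le> Pa"
proof -
  have "(\<Sum>n<N. (cmod (cis (theta n) * g n * w))\<^sup>2) = (\<Sum>n<N. (cmod (g n))\<^sup>2) * (cmod w)\<^sup>2"
    by (simp add: norm_mult power_mult_distrib sum_distrib_right)
  then show ?thesis
    unfolding snr_feasible_def by (simp add: algebra_simps)
qed

text \<open>In the application q = p^2, u = |w|^2 and T is the squared cascaded gain
  |f^H Theta g|^2, bounded by S^2 through the triangle inequality.\<close>

lemma snr_ratio_le:
  fixes q T u S F G Pa Pbs s sv N :: real
  assumes "0 \<le> q" "0 \<le> u" "u \<le> Pbs" "q * (G * u + N * sv) \<le> Pa"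
    and "T \<le> S\<^sup>2" "0 \<le> F" "0 \<le> G" "0 < N" "0 < Pa" "0 < Pbs" "0 < s" "0 < sv"
  shows "q * T * u / (q * F * sv + s) \<le> Pa * Pbs * S\<^sup>2 / (Pa * sv * F + s * Pbs * G + N * s * sv)"
proof -
  define D where "D = Pa * sv * F + s * Pbs * G + N * s * sv"
  have "D > 0" "q * F * sv + s > 0"
    unfolding D_def using assms by (auto intro!: add_nonneg_pos add_nonneg_nonneg)
  have "q * u * N * sv \<le> q * Pbs * N * sv"
    using assms by (intro mult_right_mono mult_left_mono) auto
  then have "q * u * (Pbs * G + N * sv) \<le> Pbs * (q * (G * u + N * sv))"
    by (simp add: algebra_simps)
  also have "\<dots> \<le> Pbs * Pa"
    using assms by (intro mult_left_mono) auto
  finally have power: "q * u * (Pbs * G + N * sv) \<le> Pbs * Pa" .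
  have "q * u * Pa * sv * F \<le> q * Pbs * Pa * sv * F"
    using assms by (intro mult_right_mono mult_left_mono) auto
  have "q * u * D = q * u * Pa * sv * F + s * (q * u * (Pbs * G + N * sv))"
    unfolding D_def by (simp add: algebra_simps)
  also have "\<dots> \<le> q * Pbs * Pa * sv * F + s * (Pbs * Pa)"
    using \<open>q * u * Pa * sv * F \<le> _\<close> power \<open>0 < s\<close> by (intro add_mono mult_left_mono) auto
  finally have budget: "q * u * D \<le> Pa * Pbs * (q * F * sv + s)"
    by (simp add: algebra_simps)
  have "q * T * u * D \<le> S\<^sup>2 * (q * u * D)"
    using mult_right_mono[OF \<open>T \<le> S\<^sup>2\<close>, of "q * u * D"] assms \<open>D > 0\<close>
    by (simp add: mult_ac)
  also have "\<dots> \<le> S\<^sup>2 * (Pa * Pbs * (q * F * sv + s))"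
    using budget by (intro mult_left_mono) auto
  finally show ?thesis
    using \<open>D > 0\<close> \<open>q * F * sv + s > 0\<close> unfolding D_def[symmetric]
    by (simp add: divide_le_eq le_divide_eq field_simps)
qed

lemma mult_cis_neg_Arg: "c * cis (- Arg c) = complex_of_real (cmod c)"
  by (subst (1) rcis_cmod_Arg[symmetric]) (simp add: rcis_def cis_mult)

lemma snr_objective_le_optimum:
  assumes "Pbs > 0" "Pa > 0" "sigma2 > 0" "sigmav2 > 0" "N > 0"
    and "snr_feasible Pbs Pa sigmav2 g N w p theta"
  shows "snr_objective sigma2 sigmav2 f g N w p theta \<le> snr_optimum Pbs Pa sigma2 sigmav2 f g N"
proof -
  have "cmod (\<Sum>n<N. cnj (f n) * cis (theta n) * g n) \<le> (\<Sum>n<N. cmod (f n) * cmod (g n))"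
    by (rule order_trans[OF norm_sum]) (simp add: norm_mult)
  then have "(cmod (\<Sum>n<N. cnj (f n) * cis (theta n) * g n))\<^sup>2 \<le> (\<Sum>n<N. cmod (f n) * cmod (g n))\<^sup>2"
    by (intro power_mono) auto
  with assms show ?thesis
    unfolding snr_objective_eq snr_optimum_def snr_feasible_iff
    by (intro snr_ratio_le) (auto intro: sum_nonneg)
qed

lemma snr_optimum_attained:
  assumes "Pbs > 0" "Pa > 0" "sigma2 > 0" "sigmav2 > 0" "N > 0"
  shows "\<exists>w p theta. snr_feasible Pbs Pa sigmav2 g N w p theta \<and>
           snr_objective sigma2 sigmav2 f g N w p theta = snr_optimum Pbs Pa sigma2 sigmav2 f g N"
proof (intro exI conjI)
  define S where "S = (\<Sum>n<N. cmod (f n) * cmod (g n))"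
  define F where "F = (\<Sum>n<N. (cmod (f n))\<^sup>2)"
  define G where "G = (\<Sum>n<N. (cmod (g n))\<^sup>2)"
  define K where "K = G * Pbs + real N * sigmav2"
  have "G \<ge> 0" unfolding G_def by (intro sum_nonneg) auto
  then have "K > 0" unfolding K_def using assms by (intro add_nonneg_pos) auto
  let ?theta = "\<lambda>n. - Arg (cnj (f n) * g n)"
  let ?p = "sqrt (Pa / K)"
  let ?w = "complex_of_real (sqrt Pbs)"
  have p2: "?p\<^sup>2 = Pa / K" and w2: "(cmod ?w)\<^sup>2 = Pbs"
    using \<open>K > 0\<close> assms by simp_all
  have "(\<Sum>n<N. cnj (f n) * cis (?theta n) * g n) = complex_of_real S"
    unfolding S_def of_real_sum by (intro sum.cong refl)
      (metis mult.assoc mult.commute mult_cis_neg_Arg complex_mod_cnj norm_mult)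
  moreover have "S \<ge> 0"
    unfolding S_def by (intro sum_nonneg) auto
  ultimately have cophased: "cmod (\<Sum>n<N. cnj (f n) * cis (?theta n) * g n) = S"
    by simp
  show "snr_feasible Pbs Pa sigmav2 g N ?w ?p ?theta"
    unfolding snr_feasible_iff p2 w2 G_def[symmetric] using \<open>K > 0\<close> assms
    by (simp add: K_def mult.commute)
  have "Pa / K * F * sigmav2 + sigma2 = (Pa * F * sigmav2 + sigma2 * K) / K"
    using \<open>K > 0\<close> by (simp add: field_simps)
  then have "Pa / K * S\<^sup>2 * Pbs / (Pa / K * F * sigmav2 + sigma2)
      = Pa * S\<^sup>2 * Pbs / (Pa * F * sigmav2 + sigma2 * K)"
    using \<open>K > 0\<close> by simp
  also have "\<dots> = Pa * Pbs * S\<^sup>2 / (Pa * sigmav2 * F + sigma2 * Pbs * G + real N * sigma2 * sigmav2)"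
    unfolding K_def by (simp add: algebra_simps)
  finally show "snr_objective sigma2 sigmav2 f g N ?w ?p ?theta = snr_optimum Pbs Pa sigma2 sigmav2 f g N"
    unfolding snr_objective_eq snr_optimum_def cophased p2 w2 F_def[symmetric] S_def G_def .
qed

lemma snr_active_eq_optimum:
  assumes "Pbs > 0" "Pa > 0" "sigma2 > 0" "sigmav2 > 0" "N > 0"
  shows "snr_active Pbs Pa sigma2 sigmav2 f g N = snr_optimum Pbs Pa sigma2 sigmav2 f g N"
  unfolding snr_active_eq_Sup_objective
proof (rule cSup_eq_maximum)
  from snr_optimum_attained[OF assms] show "snr_optimum Pbs Pa sigma2 sigmav2 f g N \<in>
      {snr_objective sigma2 sigmav2 f g N w p theta | w p theta. snr_feasible Pbs Pa sigmav2 g N w p theta}"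
    by (metis (mono_tags, lifting) mem_Collect_eq)
qed (use snr_objective_le_optimum[OF assms] in blast)

lemma snr_optimum_div_eq:
  "snr_optimum Pbs Pa sigma2 sigmav2 f g N / real N =
     Pa * Pbs * ((\<Sum>n<N. cmod (f n) * cmod (g n)) / real N)\<^sup>2
       / (Pa * sigmav2 * ((\<Sum>n<N. (cmod (f n))\<^sup>2) / real N)
          + sigma2 * Pbs * ((\<Sum>n<N. (cmod (g n))\<^sup>2) / real N) + sigma2 * sigmav2)"
proof (cases "N = 0")
  case False
  then show ?thesis
    unfolding snr_optimum_def by (simp add: field_simps power2_eq_square)
qed (simp add: snr_optimum_def)

lemma snr_active_div_tendsto:
  assumes pos: "Pbs > 0" "Pa > 0" "sigma2 > 0" "sigmav2 > 0"
    and S: "(\<lambda>N. (\<Sum>n<N. cmod (f n) * cmod (g n)) / real N) \<longlonglongrightarrow> a"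
    and F: "(\<lambda>N. (\<Sum>n<N. (cmod (f n))\<^sup>2) / real N) \<longlonglongrightarrow> bf"
    and G: "(\<lambda>N. (\<Sum>n<N. (cmod (g n))\<^sup>2) / real N) \<longlonglongrightarrow> bg"
    and "bf \<ge> 0" "bg \<ge> 0"
  shows "(\<lambda>N. snr_active Pbs Pa sigma2 sigmav2 f g N / real N)
      \<longlonglongrightarrow> Pa * Pbs * a\<^sup>2 / (Pa * sigmav2 * bf + sigma2 * Pbs * bg + sigma2 * sigmav2)"
proof -
  have "Pa * sigmav2 * bf + sigma2 * Pbs * bg + sigma2 * sigmav2 > 0"
    using pos \<open>bf \<ge> 0\<close> \<open>bg \<ge> 0\<close> by (intro add_nonneg_pos add_nonneg_nonneg) auto
  then have "(\<lambda>N. snr_optimum Pbs Pa sigma2 sigmav2 f g N / real N)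
      \<longlonglongrightarrow> Pa * Pbs * a\<^sup>2 / (Pa * sigmav2 * bf + sigma2 * Pbs * bg + sigma2 * sigmav2)"
    unfolding snr_optimum_div_eq by (intro tendsto_intros S F G) auto
  moreover have "\<forall>\<^sub>F N in sequentially.
      snr_optimum Pbs Pa sigma2 sigmav2 f g N / real N = snr_active Pbs Pa sigma2 sigmav2 f g N / real N"
    using eventually_gt_at_top[of 0] by eventually_elim (simp add: snr_active_eq_optimum[OF pos])
  ultimately show ?thesis
    by (rule Lim_transform_eventually)
qed

section \<open>A strong law for nonnegative uncorrelated variables\<close>

lemma filterlim_floor_sqrt_at_top: "filterlim floor_sqrt at_top at_top"
  unfolding filterlim_at_top eventually_at_top_linorder
  by (metis le_floor_sqrtI power2_nat_le_eq_le)

lemma mean_between_squares: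
  fixes s :: "nat \<Rightarrow> real"
  assumes "mono s" "\<And>n. 0 \<le> s n" "0 < k" "k\<^sup>2 \<le> n" "n < (Suc k)\<^sup>2"
  shows "s (k\<^sup>2) / real ((Suc k)\<^sup>2) \<le> s n / real n"
    and "s n / real n \<le> s ((Suc k)\<^sup>2) / real (k\<^sup>2)"
proof -
  have "0 < real (k\<^sup>2)" "real (k\<^sup>2) \<le> real n" "real n \<le> real ((Suc k)\<^sup>2)"
    using assms by (simp_all only: of_nat_le_iff of_nat_0_less_iff less_imp_le) simp
  moreover have "s (k\<^sup>2) \<le> s n" "s n \<le> s ((Suc k)\<^sup>2)"
    using assms by (simp_all add: monoD)
  ultimately show "s (k\<^sup>2) / real ((Suc k)\<^sup>2) \<le> s n / real n"
    and "s n / real n \<le> s ((Suc k)\<^sup>2) / real (k\<^sup>2)"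
    using assms(2) by (meson frac_le less_le_trans order.refl)+
qed

lemma LIMSEQ_mean_from_squares:
  fixes s :: "nat \<Rightarrow> real"
  assumes "mono s" "\<And>n. 0 \<le> s n"
    and lim: "(\<lambda>k. s ((Suc k)\<^sup>2) / real ((Suc k)\<^sup>2)) \<longlonglongrightarrow> \<mu>"
  shows "(\<lambda>n. s n / real n) \<longlonglongrightarrow> \<mu>"
proof -
  let ?a = "\<lambda>k. s ((Suc k)\<^sup>2) / real ((Suc k)\<^sup>2)"
  define lo where "lo k = ?a (k - 1) * (real k / real (Suc k))\<^sup>2" for k
  define hi where "hi k = ?a k * (real (Suc k) / real k)\<^sup>2" for k
  have "(\<lambda>k. ?a (k - 1)) \<longlonglongrightarrow> \<mu>"
    by (rule filterlim_compose[OF lim filterlim_minus_const_nat_at_top])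
  then have "lo \<longlonglongrightarrow> \<mu> * 1\<^sup>2"
    unfolding lo_def by (intro tendsto_intros LIMSEQ_n_over_Suc_n)
  then have lo: "(\<lambda>n. lo (floor_sqrt n)) \<longlonglongrightarrow> \<mu>"
    by (intro filterlim_compose[OF _ filterlim_floor_sqrt_at_top]) simp
  have "hi \<longlonglongrightarrow> \<mu> * 1\<^sup>2"
    unfolding hi_def by (intro tendsto_intros lim LIMSEQ_Suc_n_over_n)
  then have hi: "(\<lambda>n. hi (floor_sqrt n)) \<longlonglongrightarrow> \<mu>"
    by (intro filterlim_compose[OF _ filterlim_floor_sqrt_at_top]) simp
  have bounds: "lo (floor_sqrt n) \<le> s n / real n \<and> s n / real n \<le> hi (floor_sqrt n)"
    if "n \<ge> 1" for n
  proof -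
    define k where "k = floor_sqrt n"
    have "0 < k" "k\<^sup>2 \<le> n" "n < (Suc k)\<^sup>2"
      using that Suc_floor_sqrt_power2_gt[of n] unfolding k_def by (simp_all add: Suc_le_eq)
    moreover have "lo k = s (k\<^sup>2) / real ((Suc k)\<^sup>2)" "hi k = s ((Suc k)\<^sup>2) / real (k\<^sup>2)"
      using \<open>0 < k\<close> unfolding lo_def hi_def by (simp_all add: power_divide)
    ultimately show ?thesis
      using mean_between_squares[OF assms(1,2)] unfolding k_def by simp
  qed
  show ?thesis
    by (rule tendsto_sandwich[OF _ _ lo hi])
      (use bounds in \<open>auto simp: eventually_at_top_linorder\<close>)
qed

lemma (in prob_space) AE_LIMSEQ_zero_of_summable_expectation:
  fixes T :: "nat \<Rightarrow> 'a \<Rightarrow> real"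
  assumes [measurable]: "\<And>k. T k \<in> borel_measurable M"
    and nonneg: "\<And>k x. 0 \<le> T k x" and int: "\<And>k. integrable M (T k)"
    and summable: "summable (\<lambda>k. expectation (T k))"
  shows "AE x in M. (\<lambda>k. T k x) \<longlonglongrightarrow> 0"
proof -
  have "(\<integral>\<^sup>+x. (\<Sum>k. ennreal (T k x)) \<partial>M) = (\<Sum>k. \<integral>\<^sup>+x. ennreal (T k x) \<partial>M)"
    by (rule nn_integral_suminf) measurable
  also have "\<dots> = (\<Sum>k. ennreal (expectation (T k)))"
    by (intro suminf_cong nn_integral_eq_integral int) (auto simp: nonneg)
  also have "\<dots> \<noteq> \<infinity>"
    using summable by (simp add: ennreal_suminf_neq_top nonneg)
  finally have "AE x in M. (\<Sum>k. ennreal (T k x)) \<noteq> \<infinity>"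
    by (intro nn_integral_PInf_AE) simp_all
  then show ?thesis
  proof eventually_elim
    case (elim x)
    then have "summable (\<lambda>k. T k x)"
      by (intro summable_suminf_not_top nonneg) (simp add: infinity_ennreal_def)
    then show ?case by (rule summable_LIMSEQ_zero)
  qed
qed

lemma (in prob_space)
  fixes X :: "nat \<Rightarrow> 'a \<Rightarrow> real"
  assumes int: "\<And>i. integrable M (X i)" and mean: "\<And>i. expectation (X i) = \<mu>"
    and int_mult: "\<And>i j. integrable M (\<lambda>x. X i x * X j x)"
    and uncorrelated: "\<And>i j. i \<noteq> j \<Longrightarrow> expectation (\<lambda>x. X i x * X j x) = \<mu>\<^sup>2"
    and second_moment: "\<And>i. expectation (\<lambda>x. X i x * X i x) \<le> V"
  shows integrable_sq_sum_deviation: "integrable M (\<lambda>x. ((\<Sum>i<n. X i x) - real n * \<mu>)\<^sup>2)"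
    and expectation_sq_sum_deviation_le:
      "expectation (\<lambda>x. ((\<Sum>i<n. X i x) - real n * \<mu>)\<^sup>2) \<le> real n * V"
proof -
  define c where "c i j x = X i x * X j x - \<mu> * X i x - \<mu> * X j x + \<mu>\<^sup>2" for i j x
  have sq: "((\<Sum>i<n. X i x) - real n * \<mu>)\<^sup>2 = (\<Sum>i<n. \<Sum>j<n. c i j x)" for x
  proof -
    have "((\<Sum>i<n. X i x) - real n * \<mu>)\<^sup>2 = (\<Sum>i<n. X i x - \<mu>) * (\<Sum>j<n. X j x - \<mu>)"
      by (simp add: sum_subtractf power2_eq_square)
    also have "\<dots> = (\<Sum>i<n. \<Sum>j<n. c i j x)"
      unfolding sum_product c_def by (simp add: algebra_simps power2_eq_square)
    finally show ?thesis .
  qed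
  have c_int: "integrable M (c i j)" for i j
    unfolding c_def[abs_def] using int int_mult by simp
  have c_mean: "expectation (c i j) = expectation (\<lambda>x. X i x * X j x) - \<mu>\<^sup>2" for i j
    unfolding c_def[abs_def] using int int_mult mean by (simp add: prob_space power2_eq_square)
  show "integrable M (\<lambda>x. ((\<Sum>i<n. X i x) - real n * \<mu>)\<^sup>2)"
    unfolding sq using c_int by simp
  have "expectation (\<lambda>x. ((\<Sum>i<n. X i x) - real n * \<mu>)\<^sup>2) = (\<Sum>i<n. \<Sum>j<n. expectation (c i j))"
    unfolding sq using c_int by (simp add: Bochner_Integration.integral_sum)
  also have "\<dots> = (\<Sum>i<n. \<Sum>j\<in>{i}. expectation (c i j))"
    by (intro sum.cong refl sum.mono_neutral_right) (auto simp: c_mean uncorrelated)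
  also have "\<dots> \<le> (\<Sum>i<n. V)"
  proof (intro sum_mono)
    fix i
    show "(\<Sum>j\<in>{i}. expectation (c i j)) \<le> V"
      using second_moment[of i] zero_le_power2[of \<mu>] by (simp add: c_mean, linarith)
  qed
  finally show "expectation (\<lambda>x. ((\<Sum>i<n. X i x) - real n * \<mu>)\<^sup>2) \<le> real n * V"
    by simp
qed

lemma (in prob_space) AE_LIMSEQ_mean_along_squares:
  fixes X :: "nat \<Rightarrow> 'a \<Rightarrow> real"
  assumes [measurable]: "\<And>i. X i \<in> borel_measurable M"
    and int: "\<And>i. integrable M (X i)" and mean: "\<And>i. expectation (X i) = \<mu>"
    and int_mult: "\<And>i j. integrable M (\<lambda>x. X i x * X j x)"
    and uncorrelated: "\<And>i j. i \<noteq> j \<Longrightarrow> expectation (\<lambda>x. X i x * X j x) = \<mu>\<^sup>2"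
    and second_moment: "\<And>i. expectation (\<lambda>x. X i x * X i x) \<le> V"
  shows "AE x in M. (\<lambda>k. (\<Sum>i<(Suc k)\<^sup>2. X i x) / real ((Suc k)\<^sup>2)) \<longlonglongrightarrow> \<mu>"
proof -
  define D where "D n x = ((\<Sum>i<n. X i x) - real n * \<mu>)\<^sup>2 / (real n)\<^sup>2" for n x
  have D_eq: "D n x = ((\<Sum>i<n. X i x) / real n - \<mu>)\<^sup>2" if "n > 0" for n x
    unfolding D_def using that by (simp add: power_divide[symmetric] diff_divide_distrib)
  have D_int: "integrable M (D n)" for n
    unfolding D_def[abs_def] by (intro integrable_divide
        integrable_sq_sum_deviation[where X=X, OF int mean int_mult uncorrelated second_moment])
  have D_nonneg: "0 \<le> D n x" for n x
    by (simp add: D_def)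
  have D_bound: "\<bar>expectation (D n)\<bar> \<le> V / real n" if "n > 0" for n
  proof -
    have "expectation (D n) = expectation (\<lambda>x. ((\<Sum>i<n. X i x) - real n * \<mu>)\<^sup>2) / (real n)\<^sup>2"
      unfolding D_def by simp
    also have "\<dots> \<le> real n * V / (real n)\<^sup>2"
      by (intro divide_right_mono zero_le_power2
          expectation_sq_sum_deviation_le[where X=X, OF int mean int_mult uncorrelated second_moment])
    also have "\<dots> = V / real n"
      using that by (simp add: power2_eq_square)
    finally show ?thesis
      using D_nonneg by (simp add: integral_nonneg)
  qed
  have "summable (\<lambda>k. V / real ((Suc k)\<^sup>2))"
  proof -
    have "summable (\<lambda>k. inverse (real k ^ 2))"
      by (rule inverse_power_summable) auto
    then have "summable (\<lambda>k. V * inverse (real (Suc k) ^ 2))"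
      by (subst summable_Suc_iff) (rule summable_mult)
    then show ?thesis
      by (simp add: divide_inverse)
  qed
  then have "summable (\<lambda>k. expectation (D ((Suc k)\<^sup>2)))"
  proof (rule summable_comparison_test'[where N=0])
    show "norm (expectation (D ((Suc k)\<^sup>2))) \<le> V / real ((Suc k)\<^sup>2)" for k
      using D_bound[of "(Suc k)\<^sup>2"] by simp
  qed
  then have "AE x in M. (\<lambda>k. D ((Suc k)\<^sup>2) x) \<longlonglongrightarrow> 0"
    by (intro AE_LIMSEQ_zero_of_summable_expectation D_int D_nonneg) (simp add: D_def)
  then show ?thesis
  proof eventually_elim
    case (elim x)
    then have "(\<lambda>k. \<bar>(\<Sum>i<(Suc k)\<^sup>2. X i x) / real ((Suc k)\<^sup>2) - \<mu>\<bar>) \<longlonglongrightarrow> 0"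
      using tendsto_real_sqrt[OF elim] by (simp add: D_eq del: of_nat_Suc)
    then show ?case
      by (rule LIM_zero_cancel[OF tendsto_rabs_zero_cancel])
  qed
qed

lemma (in prob_space) strong_law_nonneg_uncorrelated:
  fixes X :: "nat \<Rightarrow> 'a \<Rightarrow> real"
  assumes "\<And>i. X i \<in> borel_measurable M" and nonneg: "\<And>i x. 0 \<le> X i x"
    and "\<And>i. integrable M (X i)" "\<And>i. expectation (X i) = \<mu>"
    and "\<And>i j. integrable M (\<lambda>x. X i x * X j x)"
    and "\<And>i j. i \<noteq> j \<Longrightarrow> expectation (\<lambda>x. X i x * X j x) = \<mu>\<^sup>2"
    and "\<And>i. expectation (\<lambda>x. X i x * X i x) \<le> V"
  shows "AE x in M. (\<lambda>n. (\<Sum>i<n. X i x) / real n) \<longlonglongrightarrow> \<mu>"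
proof -
  have "AE x in M. (\<lambda>k. (\<Sum>i<(Suc k)\<^sup>2. X i x) / real ((Suc k)\<^sup>2)) \<longlonglongrightarrow> \<mu>"
    by (rule AE_LIMSEQ_mean_along_squares) (fact assms)+
  then show ?thesis
  proof eventually_elim
    case (elim x)
    moreover have "mono (\<lambda>n. \<Sum>i<n. X i x)"
      by (intro monoI sum_mono2) (auto simp: nonneg)
    ultimately show ?case
      by (intro LIMSEQ_mean_from_squares) (auto intro: sum_nonneg nonneg)
  qed
qed

section \<open>Moments of the circularly symmetric complex Gaussian\<close>

lemma nn_integral_inverse_1_plus_square:
  "(\<integral>\<^sup>+t. ennreal (inverse (1 + t\<^sup>2)) \<partial>lborel) = ennreal pi"
proof -
  have "integrable lborel (\<lambda>t::real. inverse (1 + t\<^sup>2))"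
    using integrable_inverse_1_plus_square by (simp add: set_integrable_def einterval_eq_UNIV)
  moreover have "(\<integral>t. inverse (1 + t\<^sup>2) \<partial>lborel) = pi"
    using LBINT_inverse_1_plus_square by (simp add: interval_lebesgue_integral_def set_lebesgue_integral_def einterval_eq_UNIV)
  ultimately show ?thesis
    by (subst nn_integral_eq_integral) (auto simp: add_pos_nonneg)
qed

text \<open>The integrand of the Rayleigh mean after the substitution y = x t.\<close>

lemma abs_mult_normal_density_norm_eq:
  fixes s x t :: real
  assumes s: "s > 0"
  shows "\<bar>x\<bar> * (normal_density 0 s x * normal_density 0 s (x * t) * sqrt (x\<^sup>2 + (x * t)\<^sup>2))
    = 1 / (s * sqrt (2 * pi)) * (normal_density 0 (s / sqrt (1 + t\<^sup>2)) x * x\<^sup>2)"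
proof -
  define a where "a = sqrt (1 + t\<^sup>2)"
  have a: "a > 0" unfolding a_def by (simp add: add_pos_nonneg)
  have a2: "a\<^sup>2 = 1 + t\<^sup>2" unfolding a_def by (simp add: add_pos_nonneg)
  define E where "E = exp (- (x\<^sup>2 * (1 + t\<^sup>2)) / (2 * s\<^sup>2))"
  have sq: "sqrt (x\<^sup>2 + (x * t)\<^sup>2) = \<bar>x\<bar> * a"
  proof -
    have "x\<^sup>2 + (x * t)\<^sup>2 = x\<^sup>2 * (1 + t\<^sup>2)" by (simp add: algebra_simps power_mult_distrib)
    then show ?thesis unfolding a_def by (simp add: real_sqrt_mult)
  qed
  have ee: "exp (- (x - 0)\<^sup>2 / (2 * s\<^sup>2)) * exp (- (x * t - 0)\<^sup>2 / (2 * s\<^sup>2)) = E"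
  proof -
    have "- (x - 0)\<^sup>2 / (2 * s\<^sup>2) + - (x * t - 0)\<^sup>2 / (2 * s\<^sup>2) = - (x\<^sup>2 * (1 + t\<^sup>2)) / (2 * s\<^sup>2)"
      using s by (simp add: field_simps power_mult_distrib)
    then show ?thesis unfolding E_def by (metis exp_add)
  qed
  have e2: "exp (- (x - 0)\<^sup>2 / (2 * (s / a)\<^sup>2)) = E"
    unfolding E_def using a s a2 by (simp add: power_divide field_simps)
  have s1: "sqrt (2 * pi * s\<^sup>2) = sqrt (2 * pi) * s" using s by (simp add: real_sqrt_mult)
  have s2: "sqrt (2 * pi * (s / a)\<^sup>2) = sqrt (2 * pi) * s / a" using s a
    by (simp add: real_sqrt_mult power_divide real_sqrt_divide)
  have "\<bar>x\<bar> * (normal_density 0 s x * normal_density 0 s (x * t) * sqrt (x\<^sup>2 + (x * t)\<^sup>2))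
      = x\<^sup>2 * a * E / (sqrt (2 * pi) * s * (sqrt (2 * pi) * s))"
    unfolding normal_density_def sq s1 using ee[symmetric]
    by (simp add: power2_eq_square field_simps)
  also have "\<dots> = 1 / (s * sqrt (2 * pi)) * (1 / (sqrt (2 * pi) * s / a) * E * x\<^sup>2)"
    using a s by (simp add: field_simps)
  also have "\<dots> = 1 / (s * sqrt (2 * pi)) * (normal_density 0 (s / sqrt (1 + t\<^sup>2)) x * x\<^sup>2)"
    unfolding normal_density_def a_def[symmetric] s2 e2 by simp
  finally show ?thesis .
qed

lemma nn_integral_normal_density_mult_square:
  assumes "\<sigma> > 0"
  shows "(\<integral>\<^sup>+x. ennreal (normal_density 0 \<sigma> x * x\<^sup>2) \<partial>lborel) = ennreal (\<sigma>\<^sup>2)"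
proof -
  have "has_bochner_integral lborel (\<lambda>x. normal_density 0 \<sigma> x * (x - 0) ^ (2 * 1))
      (fact (2 * 1) / ((2 / \<sigma>\<^sup>2) ^ 1 * fact 1))"
    using assms by (rule normal_moment_even)
  then have "has_bochner_integral lborel (\<lambda>x. normal_density 0 \<sigma> x * x\<^sup>2) (\<sigma>\<^sup>2)"
    using assms by simp
  then show ?thesis
    by (simp add: has_bochner_integral_iff nn_integral_eq_integral)
qed

lemma nn_integral_normal_density_norm_slice:
  fixes s x :: real
  assumes "s > 0" "x \<noteq> 0"
  shows "(\<integral>\<^sup>+y. ennreal (normal_density 0 s x * normal_density 0 s y * sqrt (x\<^sup>2 + y\<^sup>2)) \<partial>lborel)
    = (\<integral>\<^sup>+t. ennreal (1 / (s * sqrt (2 * pi)) * (normal_density 0 (s / sqrt (1 + t\<^sup>2)) x * x\<^sup>2)) \<partial>lborel)"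
proof -
  have "(\<integral>\<^sup>+y. ennreal (normal_density 0 s x * normal_density 0 s y * sqrt (x\<^sup>2 + y\<^sup>2)) \<partial>lborel)
      = ennreal \<bar>x\<bar> * (\<integral>\<^sup>+t. ennreal (normal_density 0 s x * normal_density 0 s (0 + x * t)
          * sqrt (x\<^sup>2 + (0 + x * t)\<^sup>2)) \<partial>lborel)"
    using assms by (intro nn_integral_real_affine) auto
  also have "\<dots> = (\<integral>\<^sup>+t. ennreal (\<bar>x\<bar> * (normal_density 0 s x * normal_density 0 s (x * t)
      * sqrt (x\<^sup>2 + (x * t)\<^sup>2))) \<partial>lborel)"
    by (subst nn_integral_cmult[symmetric]) (auto simp: ennreal_mult)
  finally show ?thesis
    unfolding abs_mult_normal_density_norm_eq[OF \<open>s > 0\<close>] .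
qed

lemma nn_integral_normal_density_norm:
  assumes "s > 0"
  shows "(\<integral>\<^sup>+x. \<integral>\<^sup>+y. ennreal (normal_density 0 s x * normal_density 0 s y * sqrt (x\<^sup>2 + y\<^sup>2)) \<partial>lborel \<partial>lborel)
    = ennreal (s * sqrt (pi / 2))"
proof -
  define c where "c = 1 / (s * sqrt (2 * pi))"
  have "c > 0"
    unfolding c_def using assms by simp
  define H where "H x t = c * (normal_density 0 (s / sqrt (1 + t\<^sup>2)) x * x\<^sup>2)" for x t :: real
  have inner: "(\<integral>\<^sup>+x. ennreal (H x t) \<partial>lborel) = ennreal (c * s\<^sup>2) * ennreal (inverse (1 + t\<^sup>2))" for t
  proof -
    have "ennreal (H x t) = ennreal c * ennreal (normal_density 0 (s / sqrt (1 + t\<^sup>2)) x * x\<^sup>2)" for x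
      unfolding H_def using \<open>c > 0\<close> by (intro ennreal_mult) auto
    then have "(\<integral>\<^sup>+x. ennreal (H x t) \<partial>lborel) = ennreal c * ennreal ((s / sqrt (1 + t\<^sup>2))\<^sup>2)"
      using assms by (simp add: nn_integral_cmult nn_integral_normal_density_mult_square add_pos_nonneg)
    also have "\<dots> = ennreal (c * s\<^sup>2) * ennreal (inverse (1 + t\<^sup>2))"
      using \<open>c > 0\<close> by (simp add: ennreal_mult[symmetric] power_divide add_pos_nonneg field_simps)
    finally show ?thesis .
  qed
  have "(\<integral>\<^sup>+x. \<integral>\<^sup>+y. ennreal (normal_density 0 s x * normal_density 0 s y * sqrt (x\<^sup>2 + y\<^sup>2)) \<partial>lborel \<partial>lborel)
      = (\<integral>\<^sup>+x. \<integral>\<^sup>+t. ennreal (H x t) \<partial>lborel \<partial>lborel)"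
    using AE_lborel_singleton[of 0] nn_integral_normal_density_norm_slice[OF assms]
    unfolding H_def c_def by (intro nn_integral_cong_AE) (auto elim!: eventually_mono)
  also have "\<dots> = (\<integral>\<^sup>+t. \<integral>\<^sup>+x. ennreal (H x t) \<partial>lborel \<partial>lborel)"
    by (rule lborel_pair.Fubini'[symmetric]) (unfold H_def normal_density_def, measurable)
  also have "\<dots> = ennreal (c * s\<^sup>2 * pi)"
    unfolding inner using \<open>c > 0\<close>
    by (simp add: nn_integral_cmult nn_integral_inverse_1_plus_square ennreal_mult)
  also have "c * s\<^sup>2 * pi = s * sqrt (pi / 2)"
    unfolding c_def using assms
    by (simp add: real_sqrt_mult real_sqrt_divide field_simps power2_eq_square)
  finally show ?thesis .
qed

lemma (in prob_space) indep_var_lborel_of_borel: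
  fixes X Y :: "'a \<Rightarrow> real"
  assumes "indep_var borel X borel Y"
  shows "indep_var lborel X lborel Y"
  using assms unfolding indep_var_def indep_vars_def2
  by (simp add: bool.case_eq_if measurable_lborel2)

lemma (in prob_space)
  assumes "distributed M lborel R (\<lambda>t. ennreal (normal_density 0 s t))" "s > 0"
  shows integrable_normal_even_power: "integrable M (\<lambda>x. R x ^ (2 * k))"
    and expectation_normal_even_power:
      "expectation (\<lambda>x. R x ^ (2 * k)) = fact (2 * k) / ((2 / s\<^sup>2) ^ k * fact k)"
proof -
  have "has_bochner_integral lborel (\<lambda>x. normal_density 0 s x * (x - 0) ^ (2 * k))
      (fact (2 * k) / ((2 / s\<^sup>2) ^ k * fact k))"
    using assms(2) by (rule normal_moment_even)
  then have moment: "has_bochner_integral lborel (\<lambda>x. normal_density 0 s x * x ^ (2 * k))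
      (fact (2 * k) / ((2 / s\<^sup>2) ^ k * fact k))"
    by simp
  show "integrable M (\<lambda>x. R x ^ (2 * k))"
    using distributed_integrable[OF assms(1), of "\<lambda>x. x ^ (2 * k)"] integrable.intros[OF moment]
    by simp
  show "expectation (\<lambda>x. R x ^ (2 * k)) = fact (2 * k) / ((2 / s\<^sup>2) ^ k * fact k)"
    using distributed_integral[OF assms(1), of "\<lambda>x. x ^ (2 * k)"] has_bochner_integral_integral_eq[OF moment]
    by simp
qed

lemma (in prob_space) complex_gaussian_measurable:
  "complex_gaussian M Z \<rho> \<Longrightarrow> Z \<in> borel_measurable M"
  by (simp add: complex_gaussian_def)

lemma (in prob_space)
  assumes "complex_gaussian M Z \<rho>" "\<rho> > 0"
  shows integrable_complex_gaussian_sq_norm: "integrable M (\<lambda>x. (cmod (Z x))\<^sup>2)"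
    and expectation_complex_gaussian_sq_norm: "expectation (\<lambda>x. (cmod (Z x))\<^sup>2) = \<rho>\<^sup>2"
proof -
  define s where "s = \<rho> / sqrt 2"
  have "s > 0" "s\<^sup>2 = \<rho>\<^sup>2 / 2"
    unfolding s_def using assms(2) by (simp_all add: power_divide)
  have Re: "distributed M lborel (\<lambda>x. Re (Z x)) (\<lambda>t. ennreal (normal_density 0 s t))"
    and Im: "distributed M lborel (\<lambda>x. Im (Z x)) (\<lambda>t. ennreal (normal_density 0 s t))"
    using assms(1) unfolding complex_gaussian_def s_def by auto
  have sq: "(cmod (Z x))\<^sup>2 = Re (Z x) ^ (2 * 1) + Im (Z x) ^ (2 * 1)" for x
    by (simp add: cmod_power2)
  show "integrable M (\<lambda>x. (cmod (Z x))\<^sup>2)"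
    unfolding sq using integrable_normal_even_power[OF Re \<open>s > 0\<close>, of 1]
      integrable_normal_even_power[OF Im \<open>s > 0\<close>, of 1] by simp
  show "expectation (\<lambda>x. (cmod (Z x))\<^sup>2) = \<rho>\<^sup>2"
    unfolding sq using \<open>s\<^sup>2 = \<rho>\<^sup>2 / 2\<close>
      integrable_normal_even_power[OF Re \<open>s > 0\<close>, of 1] expectation_normal_even_power[OF Re \<open>s > 0\<close>, of 1]
      integrable_normal_even_power[OF Im \<open>s > 0\<close>, of 1] expectation_normal_even_power[OF Im \<open>s > 0\<close>, of 1]
    by simp
qed

lemma (in prob_space)
  assumes "complex_gaussian M Z \<rho>" "\<rho> > 0"
  shows integrable_complex_gaussian_sq_norm_sq: "integrable M (\<lambda>x. (cmod (Z x))\<^sup>2 * (cmod (Z x))\<^sup>2)"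
    and expectation_complex_gaussian_sq_norm_sq_le:
      "expectation (\<lambda>x. (cmod (Z x))\<^sup>2 * (cmod (Z x))\<^sup>2) \<le> 3 * \<rho> ^ 4"
proof -
  define s where "s = \<rho> / sqrt 2"
  have "s > 0" "s ^ 4 = \<rho> ^ 4 / 4"
    unfolding s_def using assms(2) by (simp_all add: power_divide power4_eq_xxxx)
  have Re: "distributed M lborel (\<lambda>x. Re (Z x)) (\<lambda>t. ennreal (normal_density 0 s t))"
    and Im: "distributed M lborel (\<lambda>x. Im (Z x)) (\<lambda>t. ennreal (normal_density 0 s t))"
    and [measurable]: "Z \<in> borel_measurable M"
    using assms(1) unfolding complex_gaussian_def s_def by auto
  define B where "B x = 2 * Re (Z x) ^ (2 * 2) + 2 * Im (Z x) ^ (2 * 2)" for x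
  have B_int: "integrable M B"
    unfolding B_def[abs_def] using integrable_normal_even_power[OF Re \<open>s > 0\<close>, of 2]
      integrable_normal_even_power[OF Im \<open>s > 0\<close>, of 2] by simp
  have "expectation B = 12 * s ^ 4"
    unfolding B_def[abs_def] using integrable_normal_even_power[OF Re \<open>s > 0\<close>, of 2]
      integrable_normal_even_power[OF Im \<open>s > 0\<close>, of 2] expectation_normal_even_power[OF Re \<open>s > 0\<close>, of 2]
      expectation_normal_even_power[OF Im \<open>s > 0\<close>, of 2] \<open>s > 0\<close>
    by (simp add: fact_numeral field_simps power_divide)
  also have "\<dots> = 3 * \<rho> ^ 4"
    using \<open>s ^ 4 = \<rho> ^ 4 / 4\<close> by simp
  finally have "expectation B = 3 * \<rho> ^ 4" .
  have "(a\<^sup>2 + b\<^sup>2) * (a\<^sup>2 + b\<^sup>2) \<le> 2 * a ^ (2 * 2) + 2 * b ^ (2 * 2)" for a b :: real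
  proof -
    have "2 * a ^ (2 * 2) + 2 * b ^ (2 * 2) - (a\<^sup>2 + b\<^sup>2) * (a\<^sup>2 + b\<^sup>2) = (a\<^sup>2 - b\<^sup>2)\<^sup>2"
      by (simp add: power2_eq_square power4_eq_xxxx algebra_simps)
    then show ?thesis
      using zero_le_power2[of "a\<^sup>2 - b\<^sup>2"] by linarith
  qed
  then have bound: "norm ((cmod (Z x))\<^sup>2 * (cmod (Z x))\<^sup>2) \<le> B x" for x
    unfolding B_def cmod_power2 by simp
  show int: "integrable M (\<lambda>x. (cmod (Z x))\<^sup>2 * (cmod (Z x))\<^sup>2)"
    using bound by (intro Bochner_Integration.integrable_bound[OF B_int])
      (auto intro: order_trans[OF _ abs_ge_self])
  have "expectation (\<lambda>x. (cmod (Z x))\<^sup>2 * (cmod (Z x))\<^sup>2) \<le> expectation B"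
    using bound by (intro integral_mono int B_int) (auto intro: order_trans[OF abs_ge_self])
  with \<open>expectation B = 3 * \<rho> ^ 4\<close>
  show "expectation (\<lambda>x. (cmod (Z x))\<^sup>2 * (cmod (Z x))\<^sup>2) \<le> 3 * \<rho> ^ 4"
    by simp
qed

lemma (in prob_space)
  assumes "complex_gaussian M Z \<rho>" "\<rho> > 0"
  shows integrable_complex_gaussian_norm: "integrable M (\<lambda>x. cmod (Z x))"
    and expectation_complex_gaussian_norm: "expectation (\<lambda>x. cmod (Z x)) = sqrt pi / 2 * \<rho>"
proof -
  define s where "s = \<rho> / sqrt 2"
  have "s > 0"
    unfolding s_def using assms(2) by simp
  have Re: "distributed M lborel (\<lambda>x. Re (Z x)) (\<lambda>t. ennreal (normal_density 0 s t))"
    and Im: "distributed M lborel (\<lambda>x. Im (Z x)) (\<lambda>t. ennreal (normal_density 0 s t))"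
    and indep: "indep_var borel (\<lambda>x. Re (Z x)) borel (\<lambda>x. Im (Z x))"
    and [measurable]: "Z \<in> borel_measurable M"
    using assms(1) unfolding complex_gaussian_def s_def by auto
  have joint: "distributed M (lborel \<Otimes>\<^sub>M lborel) (\<lambda>x. (Re (Z x), Im (Z x)))
      (\<lambda>(x, y). ennreal (normal_density 0 s x) * ennreal (normal_density 0 s y))"
    by (rule distributed_joint_indep[OF _ _ Re Im indep_var_lborel_of_borel[OF indep]])
      (auto intro: lborel.sigma_finite_measure_axioms)
  have "(\<integral>\<^sup>+x. ennreal (cmod (Z x)) \<partial>M)
      = (\<integral>\<^sup>+x. ennreal (sqrt ((fst (Re (Z x), Im (Z x)))\<^sup>2 + (snd (Re (Z x), Im (Z x)))\<^sup>2)) \<partial>M)"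
    by (simp add: norm_complex_def)
  also have "\<dots> = (\<integral>\<^sup>+p. (case p of (x, y) \<Rightarrow> ennreal (normal_density 0 s x) * ennreal (normal_density 0 s y))
      * ennreal (sqrt ((fst p)\<^sup>2 + (snd p)\<^sup>2)) \<partial>(lborel \<Otimes>\<^sub>M lborel))"
    by (rule distributed_nn_integral[OF joint, symmetric]) measurable
  also have "\<dots> = (\<integral>\<^sup>+p. ennreal (normal_density 0 s (fst p)
      * normal_density 0 s (snd p) * sqrt ((fst p)\<^sup>2 + (snd p)\<^sup>2)) \<partial>(lborel \<Otimes>\<^sub>M lborel))"
    by (intro nn_integral_cong) (auto simp: ennreal_mult[symmetric] split: prod.split)
  also have "\<dots> = (\<integral>\<^sup>+x. \<integral>\<^sup>+y. ennreal (normal_density 0 s x * normal_density 0 s y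
      * sqrt (x\<^sup>2 + y\<^sup>2)) \<partial>lborel \<partial>lborel)"
    by (subst lborel.nn_integral_fst[symmetric]) (auto simp: normal_density_def)
  also have "\<dots> = ennreal (s * sqrt (pi / 2))"
    by (rule nn_integral_normal_density_norm[OF \<open>s > 0\<close>])
  finally have "has_bochner_integral M (\<lambda>x. cmod (Z x)) (s * sqrt (pi / 2))"
    using \<open>s > 0\<close> by (intro has_bochner_integral_nn_integral) auto
  moreover have "s * sqrt (pi / 2) = sqrt pi / 2 * \<rho>"
    unfolding s_def by (simp add: real_sqrt_divide)
  ultimately show "integrable M (\<lambda>x. cmod (Z x))"
    and "expectation (\<lambda>x. cmod (Z x)) = sqrt pi / 2 * \<rho>"
    by (simp_all add: has_bochner_integral_iff)
qed

section \<open>Almost sure limits of the channel averages\<close>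

lemma (in prob_space)
  fixes Z :: "'i \<Rightarrow> 'a \<Rightarrow> 'b::topological_space" and h :: "'i \<Rightarrow> 'b \<Rightarrow> real"
  assumes indep: "indep_vars (\<lambda>_. borel) Z UNIV" and "finite I"
    and [measurable]: "\<And>k. k \<in> I \<Longrightarrow> h k \<in> borel_measurable borel"
    and int: "\<And>k. k \<in> I \<Longrightarrow> integrable M (\<lambda>x. h k (Z k x))"
  shows integrable_indep_vars_prod: "integrable M (\<lambda>x. \<Prod>k\<in>I. h k (Z k x))"
    and expectation_indep_vars_prod:
      "expectation (\<lambda>x. \<Prod>k\<in>I. h k (Z k x)) = (\<Prod>k\<in>I. expectation (\<lambda>x. h k (Z k x)))"
proof -
  have "indep_vars (\<lambda>_. borel) (\<lambda>k x. h k (Z k x)) I"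
    by (rule indep_vars_compose2[OF indep_vars_subset[OF indep subset_UNIV]]) auto
  then show "integrable M (\<lambda>x. \<Prod>k\<in>I. h k (Z k x))"
    and "expectation (\<lambda>x. \<Prod>k\<in>I. h k (Z k x)) = (\<Prod>k\<in>I. expectation (\<lambda>x. h k (Z k x)))"
    using \<open>finite I\<close> int by (simp_all add: indep_vars_integrable indep_vars_lebesgue_integral)
qed

lemma (in prob_space)
  fixes Z :: "'i \<Rightarrow> 'a \<Rightarrow> complex" and \<rho> :: "'i \<Rightarrow> real"
  assumes indep: "indep_vars (\<lambda>_. borel) Z UNIV" and "finite I"
    and gauss: "\<And>k. k \<in> I \<Longrightarrow> complex_gaussian M (Z k) (\<rho> k)" "\<And>k. k \<in> I \<Longrightarrow> \<rho> k > 0"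
  shows integrable_prod_norm_complex_gaussian: "integrable M (\<lambda>x. \<Prod>k\<in>I. cmod (Z k x))"
    and expectation_prod_norm_complex_gaussian:
      "expectation (\<lambda>x. \<Prod>k\<in>I. cmod (Z k x)) = (\<Prod>k\<in>I. sqrt pi / 2 * \<rho> k)"
    and integrable_prod_sq_norm_complex_gaussian: "integrable M (\<lambda>x. \<Prod>k\<in>I. (cmod (Z k x))\<^sup>2)"
    and expectation_prod_sq_norm_complex_gaussian:
      "expectation (\<lambda>x. \<Prod>k\<in>I. (cmod (Z k x))\<^sup>2) = (\<Prod>k\<in>I. (\<rho> k)\<^sup>2)"
proof -
  note norm = integrable_complex_gaussian_norm[OF gauss] expectation_complex_gaussian_norm[OF gauss]
  note sq_norm = integrable_complex_gaussian_sq_norm[OF gauss] expectation_complex_gaussian_sq_norm[OF gauss]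
  show "integrable M (\<lambda>x. \<Prod>k\<in>I. cmod (Z k x))"
    and "expectation (\<lambda>x. \<Prod>k\<in>I. cmod (Z k x)) = (\<Prod>k\<in>I. sqrt pi / 2 * \<rho> k)"
    using integrable_indep_vars_prod[where h="\<lambda>_. cmod", OF indep \<open>finite I\<close>]
      expectation_indep_vars_prod[where h="\<lambda>_. cmod", OF indep \<open>finite I\<close>] norm
    by (simp_all cong: prod.cong)
  show "integrable M (\<lambda>x. \<Prod>k\<in>I. (cmod (Z k x))\<^sup>2)"
    and "expectation (\<lambda>x. \<Prod>k\<in>I. (cmod (Z k x))\<^sup>2) = (\<Prod>k\<in>I. (\<rho> k)\<^sup>2)"
    using integrable_indep_vars_prod[where h="\<lambda>_ z. (cmod z)\<^sup>2", OF indep \<open>finite I\<close>]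
      expectation_indep_vars_prod[where h="\<lambda>_ z. (cmod z)\<^sup>2", OF indep \<open>finite I\<close>] sq_norm
    by (simp_all cong: prod.cong)
qed

text \<open>The injection \<iota> selects a subfamily of the independent family Z, such as the
  f n inside case_sum f g.\<close>

lemma (in prob_space) AE_LIMSEQ_mean_sq_norm_complex_gaussian:
  fixes Z :: "'i \<Rightarrow> 'a \<Rightarrow> complex" and \<iota> :: "nat \<Rightarrow> 'i"
  assumes indep: "indep_vars (\<lambda>_. borel) Z UNIV" and "inj \<iota>"
    and gauss: "\<And>n. complex_gaussian M (Z (\<iota> n)) \<rho>" and "\<rho> > 0"
  shows "AE x in M. (\<lambda>N. (\<Sum>n<N. (cmod (Z (\<iota> n) x))\<^sup>2) / real N) \<longlonglongrightarrow> \<rho>\<^sup>2"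
proof (rule strong_law_nonneg_uncorrelated)
  note [measurable] = complex_gaussian_measurable[OF gauss]
  have pair: "integrable M (\<lambda>x. (cmod (Z (\<iota> i) x))\<^sup>2 * (cmod (Z (\<iota> j) x))\<^sup>2) \<and>
      expectation (\<lambda>x. (cmod (Z (\<iota> i) x))\<^sup>2 * (cmod (Z (\<iota> j) x))\<^sup>2) = (\<rho>\<^sup>2)\<^sup>2"
    if "i \<noteq> j" for i j
  proof -
    have "\<iota> i \<noteq> \<iota> j"
      using \<open>inj \<iota>\<close> that by (auto dest: injD)
    have "complex_gaussian M (Z k) \<rho>" if "k \<in> {\<iota> i, \<iota> j}" for k
      using that gauss by auto
    from integrable_prod_sq_norm_complex_gaussian[where I="{\<iota> i, \<iota> j}", OF indep _ this \<open>\<rho> > 0\<close>]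
      expectation_prod_sq_norm_complex_gaussian[where I="{\<iota> i, \<iota> j}", OF indep _ this \<open>\<rho> > 0\<close>]
    show ?thesis
      using \<open>\<iota> i \<noteq> \<iota> j\<close> by (simp add: power2_eq_square)
  qed
  show "integrable M (\<lambda>x. (cmod (Z (\<iota> i) x))\<^sup>2 * (cmod (Z (\<iota> j) x))\<^sup>2)" for i j
    using pair integrable_complex_gaussian_sq_norm_sq[OF gauss \<open>\<rho> > 0\<close>] by (cases "i = j") auto
  show "expectation (\<lambda>x. (cmod (Z (\<iota> i) x))\<^sup>2 * (cmod (Z (\<iota> j) x))\<^sup>2) = (\<rho>\<^sup>2)\<^sup>2"
    if "i \<noteq> j" for i j
    using pair[OF that] ..
  show "expectation (\<lambda>x. (cmod (Z (\<iota> i) x))\<^sup>2 * (cmod (Z (\<iota> i) x))\<^sup>2) \<le> 3 * \<rho> ^ 4" for i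
    by (rule expectation_complex_gaussian_sq_norm_sq_le[OF gauss \<open>\<rho> > 0\<close>])
  show "(\<lambda>x. (cmod (Z (\<iota> i) x))\<^sup>2) \<in> borel_measurable M"
    and "integrable M (\<lambda>x. (cmod (Z (\<iota> i) x))\<^sup>2)"
    and "expectation (\<lambda>x. (cmod (Z (\<iota> i) x))\<^sup>2) = \<rho>\<^sup>2"
    and "0 \<le> (cmod (Z (\<iota> i) x))\<^sup>2" for i x
    using integrable_complex_gaussian_sq_norm[OF gauss \<open>\<rho> > 0\<close>]
      expectation_complex_gaussian_sq_norm[OF gauss \<open>\<rho> > 0\<close>] by simp_all
qed

lemma (in prob_space) AE_LIMSEQ_mean_norm_mult_complex_gaussian:
  fixes f g :: "nat \<Rightarrow> 'a \<Rightarrow> complex"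
  assumes indep: "indep_vars (\<lambda>_. borel) (case_sum f g) UNIV"
    and gauss_f: "\<And>n. complex_gaussian M (f n) \<rho>\<^sub>f" and gauss_g: "\<And>n. complex_gaussian M (g n) \<rho>\<^sub>g"
    and "\<rho>\<^sub>f > 0" "\<rho>\<^sub>g > 0"
  shows "AE x in M. (\<lambda>N. (\<Sum>n<N. cmod (f n x) * cmod (g n x)) / real N) \<longlonglongrightarrow> pi / 4 * \<rho>\<^sub>f * \<rho>\<^sub>g"
proof (rule strong_law_nonneg_uncorrelated)
  let ?\<rho> = "case_sum (\<lambda>_. \<rho>\<^sub>f) (\<lambda>_. \<rho>\<^sub>g)"
  have "complex_gaussian M (case_sum f g k) (?\<rho> k)" "?\<rho> k > 0" for k
    using gauss_f gauss_g \<open>\<rho>\<^sub>f > 0\<close> \<open>\<rho>\<^sub>g > 0\<close> by (cases k; simp)+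
  note norms = integrable_prod_norm_complex_gaussian[OF indep _ this]
    expectation_prod_norm_complex_gaussian[OF indep _ this]
    integrable_prod_sq_norm_complex_gaussian[OF indep _ this]
    expectation_prod_sq_norm_complex_gaussian[OF indep _ this]
  have mean: "sqrt pi / 2 * \<rho>\<^sub>f * (sqrt pi / 2 * \<rho>\<^sub>g) = pi / 4 * \<rho>\<^sub>f * \<rho>\<^sub>g"
    by (simp add: field_simps)
  note [measurable] = complex_gaussian_measurable[OF gauss_f] complex_gaussian_measurable[OF gauss_g]
  show "(\<lambda>x. cmod (f i x) * cmod (g i x)) \<in> borel_measurable M"
    and "0 \<le> cmod (f i x) * cmod (g i x)" for i x
    by simp_all
  show "integrable M (\<lambda>x. cmod (f i x) * cmod (g i x))"
    and "expectation (\<lambda>x. cmod (f i x) * cmod (g i x)) = pi / 4 * \<rho>\<^sub>f * \<rho>\<^sub>g" for i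
    using norms(1,2)[of "{Inl i, Inr i}"] mean by simp_all
  have four: "(\<Prod>k\<in>{Inl i, Inr i, Inl j, Inr j}. cmod (case_sum f g k x))
      = cmod (f i x) * cmod (g i x) * (cmod (f j x) * cmod (g j x))" if "i \<noteq> j" for i j x
    using that by (simp add: mult.assoc)
  have two: "(\<Prod>k\<in>{Inl i, Inr i}. (cmod (case_sum f g k x))\<^sup>2)
      = cmod (f i x) * cmod (g i x) * (cmod (f i x) * cmod (g i x))" for i x
    by (simp add: power2_eq_square mult_ac)
  show "integrable M (\<lambda>x. cmod (f i x) * cmod (g i x) * (cmod (f j x) * cmod (g j x)))" for i j
  proof (cases "i = j")
    case True
    then show ?thesis
      using norms(3)[of "{Inl i, Inr i}", unfolded two] by simp
  next
    case False
    then show ?thesis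
      using norms(1)[of "{Inl i, Inr i, Inl j, Inr j}", unfolded four[OF False]] by simp
  qed
  show "expectation (\<lambda>x. cmod (f i x) * cmod (g i x) * (cmod (f j x) * cmod (g j x)))
      = (pi / 4 * \<rho>\<^sub>f * \<rho>\<^sub>g)\<^sup>2" if "i \<noteq> j" for i j
  proof -
    have "(\<Prod>k\<in>{Inl i, Inr i, Inl j, Inr j}. sqrt pi / 2 * ?\<rho> k)
        = (sqrt pi / 2 * \<rho>\<^sub>f * (sqrt pi / 2 * \<rho>\<^sub>g))\<^sup>2"
      using that by (simp add: power2_eq_square)
    also have "\<dots> = (pi / 4 * \<rho>\<^sub>f * \<rho>\<^sub>g)\<^sup>2"
      unfolding mean ..
    finally show ?thesis
      using norms(2)[of "{Inl i, Inr i, Inl j, Inr j}", unfolded four[OF that]] by simp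
  qed
  show "expectation (\<lambda>x. cmod (f i x) * cmod (g i x) * (cmod (f i x) * cmod (g i x)))
      \<le> \<rho>\<^sub>f\<^sup>2 * \<rho>\<^sub>g\<^sup>2" for i
    using norms(4)[of "{Inl i, Inr i}", unfolded two] by simp
qed

theorem lemma2:
  fixes M :: "'a measure"
    and f g :: "nat \<Rightarrow> 'a \<Rightarrow> complex"
    and Pbs Pa sigma2 sigmav2 rho_f rho_g :: real
  assumes "prob_space M"
    and "Pbs > 0" and "Pa > 0" and "sigma2 > 0" and "sigmav2 > 0"
    and "rho_f > 0" and "rho_g > 0"
    and indep: "prob_space.indep_vars M (\<lambda>_. borel)
                 (\<lambda>i. case i of Inl n \<Rightarrow> f n | Inr n \<Rightarrow> g n) UNIV"
    and gauss_f: "\<And>n. complex_gaussian M (f n) rho_f"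
    and gauss_g: "\<And>n. complex_gaussian M (g n) rho_g"
  shows "AE x in M.
           (\<lambda>N. snr_active Pbs Pa sigma2 sigmav2 (\<lambda>n. f n x) (\<lambda>n. g n x) N / real N)
           \<longlonglongrightarrow> Pbs * Pa * pi\<^sup>2 * rho_f\<^sup>2 * rho_g\<^sup>2
               / (16 * (Pa * sigmav2 * rho_f\<^sup>2 + Pbs * sigma2 * rho_g\<^sup>2 + sigma2 * sigmav2))"
proof -
  interpret prob_space M by fact
  have pos: "Pbs > 0" "Pa > 0" "sigma2 > 0" "sigmav2 > 0" and "rho_f > 0" "rho_g > 0"
    by fact+
  have "AE x in M. (\<lambda>N. (\<Sum>n<N. cmod (f n x) * cmod (g n x)) / real N) \<longlonglongrightarrow> pi / 4 * rho_f * rho_g"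
    using AE_LIMSEQ_mean_norm_mult_complex_gaussian[OF indep gauss_f gauss_g] \<open>rho_f > 0\<close> \<open>rho_g > 0\<close>
    by simp
  moreover have "AE x in M. (\<lambda>N. (\<Sum>n<N. (cmod (f n x))\<^sup>2) / real N) \<longlonglongrightarrow> rho_f\<^sup>2"
    using AE_LIMSEQ_mean_sq_norm_complex_gaussian[OF indep, of Inl] gauss_f \<open>rho_f > 0\<close> by simp
  moreover have "AE x in M. (\<lambda>N. (\<Sum>n<N. (cmod (g n x))\<^sup>2) / real N) \<longlonglongrightarrow> rho_g\<^sup>2"
    using AE_LIMSEQ_mean_sq_norm_complex_gaussian[OF indep, of Inr] gauss_g \<open>rho_g > 0\<close> by simp
  ultimately show ?thesis
  proof eventually_elim
    case (elim x)
    have "Pa * Pbs * (pi / 4 * rho_f * rho_g)\<^sup>2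
        / (Pa * sigmav2 * rho_f\<^sup>2 + sigma2 * Pbs * rho_g\<^sup>2 + sigma2 * sigmav2)
      = Pbs * Pa * pi\<^sup>2 * rho_f\<^sup>2 * rho_g\<^sup>2
        / (16 * (Pa * sigmav2 * rho_f\<^sup>2 + Pbs * sigma2 * rho_g\<^sup>2 + sigma2 * sigmav2))"
      by (simp add: power_mult_distrib power_divide mult_ac)
    with snr_active_div_tendsto[OF pos elim zero_le_power2 zero_le_power2] show ?case
      by simp
  qed
qed

end
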